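(* Let $\omega\ge2$ and let $\Gamma$ be an $\omega$-clique regular finite simple graph with vertices $v_1,\dots,v_n$, adjacency matrix $A$ and degree matrix $D=\mathrm{diag}(d(v_1),\dots,d(v_n))$, and with cliques of order $\omega$ listed $c_1,\dots,c_m$. Let $A_C$ be the adjacency matrix of $C_\omega(\Gamma)$ in this order, and let $R$ be the $n\times m$ matrix with $R_{ij}=1$ if $v_i\in c_j$ and $R_{ij}=0$ otherwise. Then (1) $R^TR=A_C+\omega I_m$, and (2) $RR^T=A+\frac{1}{\omega-1}D$.
   Context: A graph is $\omega$-clique regular if it has a nonempty edge set and every edge lies in exactly one clique of order $\omega$. $C_\omega(\Gamma)$ has as vertices the cliques of order $\omega$ of $\Gamma$, two distinct ones adjacent iff they have nonempty intersection. *)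

theory Defs
  imports "Jordan_Normal_Form.Matrix"
begin

definition simple_graph :: "'a set \<Rightarrow> ('a \<Rightarrow> 'a \<Rightarrow> bool) \<Rightarrow> bool" where
  "simple_graph V E \<longleftrightarrow> finite V \<and> (\<forall>x y. E x y \<longrightarrow> x \<in> V \<and> y \<in> V)
     \<and> (\<forall>x y. E x y \<longrightarrow> E y x) \<and> (\<forall>x. \<not> E x x)"

definition is_clique :: "'a set \<Rightarrow> ('a \<Rightarrow> 'a \<Rightarrow> bool) \<Rightarrow> 'a set \<Rightarrow> bool" where
  "is_clique V E K \<longleftrightarrow> K \<subseteq> V \<and> (\<forall>x\<in>K. \<forall>y\<in>K. x \<noteq> y \<longrightarrow> E x y)"

definition cliques_of_order :: "'a set \<Rightarrow> ('a \<Rightarrow> 'a \<Rightarrow> bool) \<Rightarrow> nat \<Rightarrow> 'a set set" where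
  "cliques_of_order V E w = {K. is_clique V E K \<and> finite K \<and> card K = w}"

definition clique_regular :: "'a set \<Rightarrow> ('a \<Rightarrow> 'a \<Rightarrow> bool) \<Rightarrow> nat \<Rightarrow> bool" where
  "clique_regular V E w \<longleftrightarrow> (\<exists>x y. E x y) \<and>
     (\<forall>x y. E x y \<longrightarrow> (\<exists>!K. K \<in> cliques_of_order V E w \<and> x \<in> K \<and> y \<in> K))"

definition degree :: "'a set \<Rightarrow> ('a \<Rightarrow> 'a \<Rightarrow> bool) \<Rightarrow> 'a \<Rightarrow> nat" where
  "degree V E x = card {y \<in> V. E x y}"

text \<open>Matrices w.r.t. the vertex ordering vs = [v_1,...,v_n] and the clique
ordering cs = [c_1,...,c_m] (0-based indices).\<close>
definition adj_matrix :: "'a list \<Rightarrow> ('a \<Rightarrow> 'a \<Rightarrow> bool) \<Rightarrow> real mat" where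
  "adj_matrix vs E = mat (length vs) (length vs) (\<lambda>(i,j). if E (vs!i) (vs!j) then 1 else 0)"

definition degree_matrix :: "'a list \<Rightarrow> ('a \<Rightarrow> 'a \<Rightarrow> bool) \<Rightarrow> real mat" where
  "degree_matrix vs E = mat (length vs) (length vs)
     (\<lambda>(i,j). if i = j then real (degree (set vs) E (vs!i)) else 0)"

definition clique_graph_adj_matrix :: "'a set list \<Rightarrow> real mat" where
  "clique_graph_adj_matrix cs = mat (length cs) (length cs)
     (\<lambda>(i,j). if i \<noteq> j \<and> cs!i \<inter> cs!j \<noteq> {} then 1 else 0)"

definition incidence_matrix :: "'a list \<Rightarrow> 'a set list \<Rightarrow> real mat" where
  "incidence_matrix vs cs = mat (length vs) (length cs)
     (\<lambda>(i,j). if vs!i \<in> cs!j then 1 else 0)"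

end

theory Submission
  imports Defs
begin

text \<open>The (j,k) entry of \<open>R\<^sup>T R\<close> is \<open>|c\<^sub>j \<inter> c\<^sub>k|\<close>, and the (i,i') entry of \<open>R R\<^sup>T\<close>
  is the number of \<omega>-cliques containing both \<open>v\<^sub>i\<close> and \<open>v\<^sub>i'\<close>. By clique regularity two
  distinct vertices lie in a common \<omega>-clique iff they are adjacent, and then in exactly
  one; so distinct \<omega>-cliques meet in at most one vertex. Hence for a vertex v the sets
  \<open>c - {v}\<close>, with c ranging over the \<omega>-cliques containing v, partition the neighbourhood
  of v, and v lies in exactly \<open>d(v) / (\<omega> - 1)\<close> of them.\<close>

lemma card_indices_filter_distinct:
  assumes "distinct xs"
  shows "card {i. i < length xs \<and> P (xs ! i)} = card {x \<in> set xs. P x}"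
proof -
  have "card {i. i < length xs \<and> P (xs ! i)} = length (filter P xs)"
    by (rule length_filter_conv_card[symmetric])
  also have "\<dots> = card {x \<in> set xs. P x}"
    using assms by (simp add: distinct_length_filter Collect_conj_eq Int_commute)
  finally show ?thesis .
qed

lemma transpose_incidence_mult_incidence_entry:
  assumes "distinct vs" "j < length cs" "k < length cs"
  shows "(transpose_mat (incidence_matrix vs cs) * incidence_matrix vs cs) $$ (j, k)
     = real (card {v \<in> set vs. v \<in> cs ! j \<and> v \<in> cs ! k})"
proof -
  have "(transpose_mat (incidence_matrix vs cs) * incidence_matrix vs cs) $$ (j, k)
     = (\<Sum>i<length vs. of_bool (vs ! i \<in> cs ! j \<and> vs ! i \<in> cs ! k))"
    using assms(2,3)
    by (auto simp: incidence_matrix_def scalar_prod_def atLeast0LessThan simp del: sum_of_bool_eq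
        intro!: sum.cong)
  also have "\<dots> = real (card {i. i < length vs \<and> vs ! i \<in> cs ! j \<and> vs ! i \<in> cs ! k})"
    by (simp add: lessThan_def Collect_conj_eq)
  also have "\<dots> = real (card {v \<in> set vs. v \<in> cs ! j \<and> v \<in> cs ! k})"
    using card_indices_filter_distinct[OF assms(1), of "\<lambda>v. v \<in> cs ! j \<and> v \<in> cs ! k"] by simp
  finally show ?thesis .
qed

lemma incidence_mult_transpose_incidence_entry:
  assumes "distinct cs" "i < length vs" "i' < length vs"
  shows "(incidence_matrix vs cs * transpose_mat (incidence_matrix vs cs)) $$ (i, i')
     = real (card {K \<in> set cs. vs ! i \<in> K \<and> vs ! i' \<in> K})"
proof -
  have "(incidence_matrix vs cs * transpose_mat (incidence_matrix vs cs)) $$ (i, i')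
     = (\<Sum>j<length cs. of_bool (vs ! i \<in> cs ! j \<and> vs ! i' \<in> cs ! j))"
    using assms(2,3)
    by (auto simp: incidence_matrix_def scalar_prod_def atLeast0LessThan simp del: sum_of_bool_eq
        intro!: sum.cong)
  also have "\<dots> = real (card {j. j < length cs \<and> vs ! i \<in> cs ! j \<and> vs ! i' \<in> cs ! j})"
    by (simp add: lessThan_def Collect_conj_eq)
  also have "\<dots> = real (card {K \<in> set cs. vs ! i \<in> K \<and> vs ! i' \<in> K})"
    using card_indices_filter_distinct[OF assms(1), of "\<lambda>K. vs ! i \<in> K \<and> vs ! i' \<in> K"] by simp
  finally show ?thesis .
qed

lemma clique_regular_unique_clique:
  assumes "clique_regular V E w"
    and "K \<in> cliques_of_order V E w" "K' \<in> cliques_of_order V E w"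
    and "x \<in> K \<inter> K'" "y \<in> K \<inter> K'" "x \<noteq> y"
  shows "K = K'"
proof -
  have "E x y"
    using assms(2,4-6) by (auto simp: cliques_of_order_def is_clique_def)
  then show ?thesis
    using assms unfolding clique_regular_def by blast
qed

lemma clique_regular_card_Int:
  assumes "clique_regular V E w"
    and "K \<in> cliques_of_order V E w" "K' \<in> cliques_of_order V E w" "K \<noteq> K'"
  shows "card (K \<inter> K') = of_bool (K \<inter> K' \<noteq> {})"
proof (cases "K \<inter> K' = {}")
  case False
  then obtain x where x: "x \<in> K \<inter> K'" by blast
  have "y = x" if "y \<in> K \<inter> K'" for y
    using clique_regular_unique_clique[OF assms(1-3) x that] assms(4) by blast
  then have "K \<inter> K' = {x}"
    using x by blast
  then show ?thesis by simp
qed simp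

lemma card_cliques_containing_pair:
  assumes "clique_regular V E w" "x \<noteq> y"
  shows "card {K \<in> cliques_of_order V E w. x \<in> K \<and> y \<in> K} = of_bool (E x y)"
proof (cases "E x y")
  case True
  then obtain K where "K \<in> cliques_of_order V E w" "x \<in> K" "y \<in> K"
    and "\<forall>K'. K' \<in> cliques_of_order V E w \<and> x \<in> K' \<and> y \<in> K' \<longrightarrow> K' = K"
    using assms(1) unfolding clique_regular_def by blast
  then have "{K \<in> cliques_of_order V E w. x \<in> K \<and> y \<in> K} = {K}"
    by blast
  then show ?thesis
    using True by simp
next
  case False
  then have "{K \<in> cliques_of_order V E w. x \<in> K \<and> y \<in> K} = {}"
    using assms(2) by (auto simp: cliques_of_order_def is_clique_def)
  then show ?thesis
    using False by (simp only: card.empty of_bool_eq)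
qed

lemma degree_eq_card_cliques_containing:
  assumes "simple_graph V E" "clique_regular V E w"
  shows "degree V E x = (w - 1) * card {K \<in> cliques_of_order V E w. x \<in> K}"
proof -
  define C where "C = {K \<in> cliques_of_order V E w. x \<in> K}"
  have "finite C"
    using assms(1) unfolding C_def cliques_of_order_def is_clique_def simple_graph_def
    by (auto intro: finite_subset[of _ "Pow V"])
  have neighbourhood: "{y \<in> V. E x y} = (\<Union>K\<in>C. K - {x})"
  proof
    show "{y \<in> V. E x y} \<subseteq> (\<Union>K\<in>C. K - {x})"
    proof
      fix y
      assume "y \<in> {y \<in> V. E x y}"
      then have "E x y" "x \<noteq> y"
        using assms(1) by (auto simp: simple_graph_def)
      then obtain K where "K \<in> cliques_of_order V E w" "x \<in> K" "y \<in> K"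
        using assms(2) unfolding clique_regular_def by blast
      then show "y \<in> (\<Union>K\<in>C. K - {x})"
        using \<open>x \<noteq> y\<close> unfolding C_def by blast
    qed
    show "(\<Union>K\<in>C. K - {x}) \<subseteq> {y \<in> V. E x y}"
      by (auto simp: C_def cliques_of_order_def is_clique_def)
  qed
  have "card (\<Union>K\<in>C. K - {x}) = (\<Sum>K\<in>C. card (K - {x}))"
  proof (rule card_UN_disjoint[OF \<open>finite C\<close>])
    show "\<forall>K\<in>C. finite (K - {x})"
      by (auto simp: C_def cliques_of_order_def)
    show "\<forall>K\<in>C. \<forall>K'\<in>C. K \<noteq> K' \<longrightarrow> (K - {x}) \<inter> (K' - {x}) = {}"
      using clique_regular_unique_clique[OF assms(2)] unfolding C_def by blast
  qed
  also have "\<dots> = (\<Sum>K\<in>C. w - 1)"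
    by (rule sum.cong) (auto simp: C_def cliques_of_order_def)
  finally show ?thesis
    unfolding degree_def neighbourhood C_def by (simp add: mult.commute)
qed

lemma transpose_incidence_mult_incidence_eq:
  assumes "clique_regular (set vs) E w" "distinct vs" "distinct cs"
    and "set cs \<subseteq> cliques_of_order (set vs) E w"
  shows "transpose_mat (incidence_matrix vs cs) * incidence_matrix vs cs
       = clique_graph_adj_matrix cs + of_nat w \<cdot>\<^sub>m 1\<^sub>m (length cs)"
proof (rule eq_matI)
  fix j k
  assume "j < dim_row (clique_graph_adj_matrix cs + of_nat w \<cdot>\<^sub>m 1\<^sub>m (length cs))"
    and "k < dim_col (clique_graph_adj_matrix cs + of_nat w \<cdot>\<^sub>m 1\<^sub>m (length cs))"
  then have j: "j < length cs" and k: "k < length cs"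
    by (auto simp: clique_graph_adj_matrix_def)
  have cliques: "cs ! j \<in> cliques_of_order (set vs) E w" "cs ! k \<in> cliques_of_order (set vs) E w"
    using assms(4) j k nth_mem by blast+
  then have "{v \<in> set vs. v \<in> cs ! j \<and> v \<in> cs ! k} = cs ! j \<inter> cs ! k" "card (cs ! j) = w"
    by (auto simp: cliques_of_order_def is_clique_def)
  moreover have "cs ! j \<noteq> cs ! k" if "j \<noteq> k"
    using assms(3) j k that by (simp add: nth_eq_iff_index_eq)
  ultimately show "(transpose_mat (incidence_matrix vs cs) * incidence_matrix vs cs) $$ (j, k)
      = (clique_graph_adj_matrix cs + of_nat w \<cdot>\<^sub>m 1\<^sub>m (length cs)) $$ (j, k)"
    using j k transpose_incidence_mult_incidence_entry[OF assms(2) j k]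
      clique_regular_card_Int[OF assms(1) cliques]
    by (auto simp: clique_graph_adj_matrix_def)
qed (simp_all add: clique_graph_adj_matrix_def incidence_matrix_def)

lemma incidence_mult_transpose_incidence_eq:
  assumes "w \<ge> 2" "simple_graph (set vs) E" "clique_regular (set vs) E w"
    and "distinct vs" "distinct cs" "set cs = cliques_of_order (set vs) E w"
  shows "incidence_matrix vs cs * transpose_mat (incidence_matrix vs cs)
       = adj_matrix vs E + (1 / (real w - 1)) \<cdot>\<^sub>m degree_matrix vs E"
proof (rule eq_matI)
  fix i i'
  assume "i < dim_row (adj_matrix vs E + (1 / (real w - 1)) \<cdot>\<^sub>m degree_matrix vs E)"
    and "i' < dim_col (adj_matrix vs E + (1 / (real w - 1)) \<cdot>\<^sub>m degree_matrix vs E)"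
  then have i: "i < length vs" and i': "i' < length vs"
    by (auto simp: degree_matrix_def)
  have entry: "(incidence_matrix vs cs * transpose_mat (incidence_matrix vs cs)) $$ (i, i')
      = real (card {K \<in> cliques_of_order (set vs) E w. vs ! i \<in> K \<and> vs ! i' \<in> K})"
    using incidence_mult_transpose_incidence_entry[OF assms(5) i i'] assms(6) by simp
  show "(incidence_matrix vs cs * transpose_mat (incidence_matrix vs cs)) $$ (i, i')
      = (adj_matrix vs E + (1 / (real w - 1)) \<cdot>\<^sub>m degree_matrix vs E) $$ (i, i')"
  proof (cases "i = i'")
    case True
    have "real (degree (set vs) E (vs ! i))
        = (real w - 1) * real (card {K \<in> cliques_of_order (set vs) E w. vs ! i \<in> K})"
      using degree_eq_card_cliques_containing[OF assms(2,3)] assms(1) by (simp add: of_nat_diff)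
    moreover have "\<not> E (vs ! i) (vs ! i)"
      using assms(2) by (simp add: simple_graph_def)
    ultimately show ?thesis
      using True i entry assms(1) by (simp add: adj_matrix_def degree_matrix_def)
  next
    case False
    then have "vs ! i \<noteq> vs ! i'"
      using assms(4) i i' by (simp add: nth_eq_iff_index_eq)
    then show ?thesis
      using False i i' entry card_cliques_containing_pair[OF assms(3)]
      by (simp add: adj_matrix_def degree_matrix_def)
  qed
qed (simp_all add: adj_matrix_def degree_matrix_def incidence_matrix_def)

theorem lemma4:
  fixes vs :: "'a list" and E :: "'a \<Rightarrow> 'a \<Rightarrow> bool" and cs :: "'a set list" and w :: nat
  assumes "w \<ge> 2"
    and "simple_graph (set vs) E"
    and "distinct vs"
    and "clique_regular (set vs) E w"
    and "distinct cs"
    and "set cs = cliques_of_order (set vs) E w"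
  shows "(transpose_mat (incidence_matrix vs cs) * incidence_matrix vs cs
           = clique_graph_adj_matrix cs + of_nat w \<cdot>\<^sub>m 1\<^sub>m (length cs))
         \<and> ( incidence_matrix vs cs * transpose_mat (incidence_matrix vs cs)
           = adj_matrix vs E + (1 / (real w - 1)) \<cdot>\<^sub>m degree_matrix vs E)"
  using transpose_incidence_mult_incidence_eq[OF assms(4,3,5)]
    incidence_mult_transpose_incidence_eq[OF assms(1,2,4,3,5,6)] assms(6)
  by simp

end
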